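(* Let $S$ be an irreducible $\mathcal{C}$-semigroup with Frobenius vector $\mathbf f$, and let $\mathbf x\in I_S(\mathbf f)$ be a minimal generator of $S$ such that (1) $2\mathbf x-\mathbf f\notin S$, (2) $3\mathbf x\neq 2\mathbf f$, and (3) $4\mathbf x\neq 3\mathbf f$. Then $S'=(S\setminus\{\mathbf x\})\cup\{\mathbf f-\mathbf x\}$ is an irreducible $\mathcal{C}$-semigroup with Frobenius vector $\mathbf f$.
   Context: An integer cone $\mathcal{C}\subseteq\mathbb{N}^p$ is the set of integer points of a finitely generated rational cone in $\mathbb{Q}_{\ge0}^p$. A $\mathcal{C}$-semigroup is a subset $S\subseteq\mathcal{C}$ containing $0$, closed under addition, with $\mathcal{C}\setminus S$ finite; $\mathcal{H}(S)=\mathcal{C}\setminus S$. A minimal generator of $S$ is an element of its (unique) minimal generating set, i.e. a nonzero element of $S$ not expressible as a sum of two nonzero elements of $S$. A monomial order $\preceq$ on $\mathbb{N}^p$ is fixed (total order, compatible with addition, $\mathbf 0\preceq\mathbf c$ for all $\mathbf c$); the Frobenius vector is $F(S)=\max_\preceq\mathcal{H}(S)$. $\mathrm{PF}(S)=\{\mathbf y\in\mathcal{H}(S)\mid\mathbf y+(S\setminus\{0\})\subseteq S\}$; $S$ is irreducible if $\mathrm{PF}(S)=\{F(S)\}$ or $\mathrm{PF}(S)=\{F(S),F(S)/2\}$. $\mathbf x\le_{\mathcal{C}}\mathbf y$ means $\mathbf y-\mathbf x\in\mathcal{C}$, and $I_S(\mathbf n)=\{\mathbf s\in S\mid \mathbf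 s\le_{\mathcal{C}}\mathbf n\}$. The condition $2\mathbf x-\mathbf f\notin S$ is understood in $\mathbb{Z}^p$ (it holds in particular when $2\mathbf x-\mathbf f\notin\mathbb{N}^p$). *)

theory Defs
  imports "HOL-Analysis.Analysis"
begin

text \<open>Points of \<open>\<int>^p\<close> are vectors of type \<open>int ^ 'p\<close>; the dimension p is CARD('p).
  \<open>\<nat>^p\<close> is the set of componentwise nonnegative vectors.\<close>

definition natvecs :: "(int ^ 'p) set" where
  "natvecs = {x. \<forall>i. 0 \<le> x $ i}"

definition integer_cone :: "(int ^ 'p) set \<Rightarrow> bool" where
  "integer_cone C \<longleftrightarrow>
     (\<exists>G :: (real ^ 'p) set. finite G \<and> (\<forall>g\<in>G. \<forall>i. g $ i \<in> \<rat> \<and> 0 \<le> g $ i) \<and>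
        C = {x :: int ^ 'p. \<exists>l :: real ^ 'p \<Rightarrow> real.
               (\<forall>g\<in>G. l g \<in> \<rat> \<and> 0 \<le> l g) \<and>
               (\<chi> i. real_of_int (x $ i)) = (\<Sum>g\<in>G. l g *\<^sub>R g)})"

definition C_semigroup :: "(int ^ 'p) set \<Rightarrow> (int ^ 'p) set \<Rightarrow> bool" where
  "C_semigroup C S \<longleftrightarrow> S \<subseteq> C \<and> 0 \<in> S \<and> (\<forall>a\<in>S. \<forall>b\<in>S. a + b \<in> S) \<and> finite (C - S)"

definition gaps :: "(int ^ 'p) set \<Rightarrow> (int ^ 'p) set \<Rightarrow> (int ^ 'p) set" where
  "gaps C S = C - S"

definition monomial_order :: "(int ^ 'p \<Rightarrow> int ^ 'p \<Rightarrow> bool) \<Rightarrow> bool" where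
  "monomial_order le \<longleftrightarrow>
     (\<forall>x\<in>natvecs. le x x) \<and>
     (\<forall>x\<in>natvecs. \<forall>y\<in>natvecs. le x y \<and> le y x \<longrightarrow> x = y) \<and>
     (\<forall>x\<in>natvecs. \<forall>y\<in>natvecs. \<forall>z\<in>natvecs. le x y \<and> le y z \<longrightarrow> le x z) \<and>
     (\<forall>x\<in>natvecs. \<forall>y\<in>natvecs. le x y \<or> le y x) \<and>
     (\<forall>x\<in>natvecs. \<forall>y\<in>natvecs. \<forall>z\<in>natvecs. le x y \<longrightarrow> le (x + z) (y + z)) \<and>
     (\<forall>c\<in>natvecs. le 0 c)"

definition frobenius :: "(int ^ 'p \<Rightarrow> int ^ 'p \<Rightarrow> bool) \<Rightarrow> (int ^ 'p) set \<Rightarrow> (int ^ 'p) set \<Rightarrow> int ^ 'p \<Rightarrow> bool" where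
  "frobenius le C S f \<longleftrightarrow> f \<in> gaps C S \<and> (\<forall>h\<in>gaps C S. le h f)"

definition pseudo_frobenius :: "(int ^ 'p) set \<Rightarrow> (int ^ 'p) set \<Rightarrow> (int ^ 'p) set" where
  "pseudo_frobenius C S = {y \<in> gaps C S. \<forall>s \<in> S - {0}. y + s \<in> S}"

definition irreducible_Csg :: "(int ^ 'p \<Rightarrow> int ^ 'p \<Rightarrow> bool) \<Rightarrow> (int ^ 'p) set \<Rightarrow> (int ^ 'p) set \<Rightarrow> bool" where
  "irreducible_Csg le C S \<longleftrightarrow>
     (\<exists>f. frobenius le C S f \<and>
        (pseudo_frobenius C S = {f} \<or> (\<exists>h. h + h = f \<and> pseudo_frobenius C S = {f, h})))"

definition minimal_generator :: "(int ^ 'p) set \<Rightarrow> int ^ 'p \<Rightarrow> bool" where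
  "minimal_generator S x \<longleftrightarrow> x \<in> S \<and> x \<noteq> 0 \<and>
     \<not> (\<exists>a\<in>S - {0}. \<exists>b\<in>S - {0}. x = a + b)"

definition cone_le :: "(int ^ 'p) set \<Rightarrow> int ^ 'p \<Rightarrow> int ^ 'p \<Rightarrow> bool" where
  "cone_le C x y \<longleftrightarrow> y - x \<in> C"

definition I_S :: "(int ^ 'p) set \<Rightarrow> (int ^ 'p) set \<Rightarrow> int ^ 'p \<Rightarrow> (int ^ 'p) set" where
  "I_S C S n = {s \<in> S. cone_le C s n}"

end

theory Submission
  imports Defs
begin

text \<open>In an irreducible \<open>\<C>\<close>-semigroup S with Frobenius vector f every gap g satisfies
  \<open>f - g \<in> S\<close> or \<open>2g = f\<close>: some pseudo-Frobenius vector k lies above g in the order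
  \<open>g \<le>\<^sub>S k\<close>, and k is f or f/2. Conversely this duality of gaps forces irreducibility, because
  a pseudo-Frobenius vector y with \<open>f - y \<in> S\<close> would put f into S. Replacing the minimal
  generator x by \<open>f - x\<close> keeps S closed under addition exactly because of the three conditions
  on x, and keeps the duality, since the one new gap x is dual to the new element \<open>f - x\<close>.\<close>

lemma integer_cone_subset_natvecs:
  assumes "integer_cone C" "x \<in> C"
  shows "x \<in> natvecs"
proof -
  obtain G where G: "\<forall>g\<in>G. \<forall>i. g $ i \<in> \<rat> \<and> 0 \<le> g $ i"
    and C: "C = {x :: int ^ 'a. \<exists>l :: real ^ 'a \<Rightarrow> real.
               (\<forall>g\<in>G. l g \<in> \<rat> \<and> 0 \<le> l g) \<and> (\<chi> i. real_of_int (x $ i)) = (\<Sum>g\<in>G. l g *\<^sub>R g)}"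
    using assms(1) unfolding integer_cone_def by blast
  obtain l where l: "\<forall>g\<in>G. 0 \<le> l g" and x: "(\<chi> i. real_of_int (x $ i)) = (\<Sum>g\<in>G. l g *\<^sub>R g)"
    using assms(2) C by blast
  have "real_of_int (x $ i) \<ge> 0" for i
  proof -
    have "real_of_int (x $ i) = (\<Sum>g\<in>G. l g * g $ i)"
      using arg_cong[OF x, of "\<lambda>v. v $ i"] by simp
    also have "\<dots> \<ge> 0"
      using l G by (intro sum_nonneg) auto
    finally show ?thesis .
  qed
  then show ?thesis
    unfolding natvecs_def by simp
qed

lemma integer_cone_add:
  assumes "integer_cone C" "x \<in> C" "y \<in> C"
  shows "x + y \<in> C"
proof -
  obtain G where C: "C = {x :: int ^ 'a. \<exists>l :: real ^ 'a \<Rightarrow> real.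
               (\<forall>g\<in>G. l g \<in> \<rat> \<and> 0 \<le> l g) \<and> (\<chi> i. real_of_int (x $ i)) = (\<Sum>g\<in>G. l g *\<^sub>R g)}"
    using assms(1) unfolding integer_cone_def by blast
  obtain l1 where l1: "\<forall>g\<in>G. l1 g \<in> \<rat> \<and> 0 \<le> l1 g"
    and x: "(\<chi> i. real_of_int (x $ i)) = (\<Sum>g\<in>G. l1 g *\<^sub>R g)"
    using assms(2) C by blast
  obtain l2 where l2: "\<forall>g\<in>G. l2 g \<in> \<rat> \<and> 0 \<le> l2 g"
    and y: "(\<chi> i. real_of_int (y $ i)) = (\<Sum>g\<in>G. l2 g *\<^sub>R g)"
    using assms(3) C by blast
  have "(\<chi> i. real_of_int ((x + y) $ i)) = (\<chi> i. real_of_int (x $ i)) + (\<chi> i. real_of_int (y $ i))"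
    by (simp add: vec_eq_iff)
  also have "\<dots> = (\<Sum>g\<in>G. (l1 g + l2 g) *\<^sub>R g)"
    unfolding x y by (simp add: scaleR_add_left sum.distrib)
  finally show ?thesis
    unfolding C using l1 l2 by (intro CollectI exI[of _ "\<lambda>g. l1 g + l2 g"]) auto
qed

lemma sum_coordinates_pos:
  assumes "v \<in> natvecs" "v \<noteq> 0"
  shows "0 < (\<Sum>i\<in>UNIV. v $ i)"
proof -
  obtain i where i: "v $ i \<noteq> 0" using assms(2) by (auto simp: vec_eq_iff)
  have "0 \<le> v $ i" "v $ i \<le> (\<Sum>i\<in>UNIV. v $ i)"
    using assms(1) by (auto simp: natvecs_def intro!: member_le_sum)
  with i show ?thesis by linarith
qed

lemma monomial_order_le_add:
  assumes "monomial_order le" "a \<in> natvecs" "b \<in> natvecs"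
  shows "le a (a + b)"
proof -
  have "(0::int ^ 'a) \<in> natvecs" unfolding natvecs_def by simp
  then have "le (0 + a) (b + a)"
    using assms unfolding monomial_order_def by blast
  then show ?thesis by (simp add: add.commute)
qed

lemma frobenius_unique:
  assumes "integer_cone C" "monomial_order le" "frobenius le C S f" "frobenius le C S f'"
  shows "f = f'"
proof -
  have "f \<in> natvecs" "f' \<in> natvecs" "le f f'" "le f' f"
    using assms integer_cone_subset_natvecs unfolding frobenius_def gaps_def by auto
  then show ?thesis using assms(2) unfolding monomial_order_def by blast
qed

text \<open>A gap k maximal (for the coordinate sum) among the gaps with \<open>k - g \<in> S\<close> is
  pseudo-Frobenius: \<open>k + s\<close> for \<open>s \<in> S - {0}\<close> has a larger coordinate sum.\<close>

lemma pseudo_frobenius_above_gap: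
  assumes cone: "integer_cone C" and sg: "C_semigroup C S" and g: "g \<in> gaps C S"
  shows "\<exists>k\<in>pseudo_frobenius C S. k - g \<in> S"
proof -
  define A where "A = {k \<in> gaps C S. k - g \<in> S}"
  define \<sigma> :: "int ^ 'a \<Rightarrow> int" where "\<sigma> v = (\<Sum>i\<in>UNIV. v $ i)" for v
  have "finite A"
    using sg unfolding A_def C_semigroup_def gaps_def by (auto intro: rev_finite_subset)
  moreover have "g \<in> A"
    using sg g unfolding A_def C_semigroup_def by auto
  ultimately have "Max (\<sigma> ` A) \<in> \<sigma> ` A"
    by (intro Max_in) auto
  then obtain k where kA: "k \<in> A" and "\<sigma> k = Max (\<sigma> ` A)" by (auto simp: image_iff)
  with \<open>finite A\<close> have k_max: "\<And>k'. k' \<in> A \<Longrightarrow> \<sigma> k' \<le> \<sigma> k" by simp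
  have "k + s \<in> S" if s: "s \<in> S" "s \<noteq> 0" for s
  proof (rule ccontr)
    assume "k + s \<notin> S"
    moreover have "k + s \<in> C" "(k - g) + s \<in> S"
      using integer_cone_add[OF cone] kA s sg unfolding A_def C_semigroup_def gaps_def by auto
    ultimately have "k + s \<in> A"
      unfolding A_def gaps_def by (simp add: diff_add_eq)
    then have "\<sigma> (k + s) \<le> \<sigma> k" by (rule k_max)
    moreover have "0 < \<sigma> s"
      unfolding \<sigma>_def using s sg integer_cone_subset_natvecs[OF cone]
      by (intro sum_coordinates_pos) (auto simp: C_semigroup_def)
    ultimately show False by (simp add: \<sigma>_def sum.distrib)
  qed
  with kA show ?thesis unfolding A_def pseudo_frobenius_def by auto
qed

lemma irreducible_Csg_gap_dual:
  assumes cone: "integer_cone C" and mo: "monomial_order le" and sg: "C_semigroup C S"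
    and irr: "irreducible_Csg le C S" and fr: "frobenius le C S f" and g: "g \<in> gaps C S"
  shows "f - g \<in> S \<or> g + g = f"
proof -
  obtain k where k: "k \<in> pseudo_frobenius C S" and kg: "k - g \<in> S"
    using pseudo_frobenius_above_gap[OF cone sg g] by blast
  obtain f' where "frobenius le C S f'" and PF:
    "pseudo_frobenius C S = {f'} \<or> (\<exists>h. h + h = f' \<and> pseudo_frobenius C S = {f', h})"
    using irr unfolding irreducible_Csg_def by blast
  then have PF_cases: "k = f \<or> k + k = f"
    using frobenius_unique[OF cone mo fr] k by auto
  show ?thesis
  proof (cases "k = f \<or> k = g")
    case True
    with kg PF_cases show ?thesis by auto
  next
    case False
    with PF_cases have "k + k = f" by simp
    moreover have "k - g \<in> S - {0}"
      using kg False by simp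
    with k have "k + (k - g) \<in> S"
      unfolding pseudo_frobenius_def by blast
    ultimately show ?thesis by (metis add_diff_eq)
  qed
qed

lemma frobenius_in_pseudo_frobenius:
  assumes cone: "integer_cone C" and mo: "monomial_order le" and sg: "C_semigroup C S"
    and fr: "frobenius le C S f"
  shows "f \<in> pseudo_frobenius C S"
proof -
  have "f + s \<in> S" if s: "s \<in> S" "s \<noteq> 0" for s
  proof (rule ccontr)
    have nat: "f \<in> natvecs" "s \<in> natvecs" "f + s \<in> natvecs"
      using integer_cone_subset_natvecs[OF cone] integer_cone_add[OF cone] s sg fr
      unfolding C_semigroup_def frobenius_def gaps_def by auto
    assume "f + s \<notin> S"
    then have "le (f + s) f"
      using fr nat(3) integer_cone_add[OF cone] s sg
      unfolding frobenius_def gaps_def C_semigroup_def by auto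
    moreover have "le f (f + s)"
      using monomial_order_le_add[OF mo nat(1,2)] .
    ultimately have "f + s = f"
      using mo nat unfolding monomial_order_def by blast
    with s show False by simp
  qed
  with fr show ?thesis unfolding pseudo_frobenius_def frobenius_def by auto
qed

lemma irreducible_Csg_if_gap_dual:
  assumes cone: "integer_cone C" and mo: "monomial_order le" and sg: "C_semigroup C S"
    and fr: "frobenius le C S f"
    and dual: "\<And>g. g \<in> gaps C S \<Longrightarrow> f - g \<in> S \<or> g + g = f"
  shows "irreducible_Csg le C S"
proof -
  have half: "y + y = f" if y: "y \<in> pseudo_frobenius C S" "y \<noteq> f" for y
  proof (rule ccontr)
    assume "y + y \<noteq> f"
    with y dual have "f - y \<in> S - {0}" unfolding pseudo_frobenius_def by auto
    with y have "y + (f - y) \<in> S" unfolding pseudo_frobenius_def by blast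
    with fr show False unfolding frobenius_def gaps_def by simp
  qed
  have f: "f \<in> pseudo_frobenius C S"
    using frobenius_in_pseudo_frobenius[OF cone mo sg fr] .
  show ?thesis
  proof (cases "pseudo_frobenius C S = {f}")
    case False
    with f obtain y where y: "y \<in> pseudo_frobenius C S" "y \<noteq> f" by blast
    have "z = y" if "z \<in> pseudo_frobenius C S" "z \<noteq> f" for z
      using half[OF that] half[OF y] by (simp add: vec_eq_iff) (metis mult_cancel_left zero_neq_numeral)
    with f y have "pseudo_frobenius C S = {f, y}" by blast
    with fr half[OF y] show ?thesis unfolding irreducible_Csg_def by blast
  qed (use fr in \<open>auto simp: irreducible_Csg_def\<close>)
qed

lemma minimal_generator_Diff_add_closed:
  assumes "minimal_generator S x" "\<And>a b. a \<in> S \<Longrightarrow> b \<in> S \<Longrightarrow> a + b \<in> S"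
    and "a \<in> S - {x}" "b \<in> S - {x}"
  shows "a + b \<in> S - {x}"
  using assms unfolding minimal_generator_def
  by (cases "a = 0"; cases "b = 0") auto

locale gap_dual_swap =
  fixes C S :: "(int ^ 'p) set" and f x :: "int ^ 'p"
  assumes cone: "integer_cone C"
    and sg: "C_semigroup C S"
    and gap_dual: "\<And>g. g \<in> gaps C S \<Longrightarrow> f - g \<in> S \<or> g + g = f"
    and mingen: "minimal_generator S x"
    and x_below_f: "f - x \<in> C"
    and two_x: "2 *s x - f \<notin> S"
    and three_x: "3 *s x \<noteq> 2 *s f"
    and four_x: "4 *s x \<noteq> 3 *s f"
begin

abbreviation swapped :: "(int ^ 'p) set" where
  "swapped \<equiv> (S - {x}) \<union> {f - x}"

lemma S_add: "a \<in> S \<Longrightarrow> b \<in> S \<Longrightarrow> a + b \<in> S"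
  using sg unfolding C_semigroup_def by blast

lemma double_x_minus_f_notin: "x + x - f \<notin> S"
proof -
  have "2 *s x - f = x + x - f" by (simp add: vec_eq_iff)
  with two_x show ?thesis by simp
qed

lemma swap_add_in_S:
  assumes b: "b \<in> S" "b \<noteq> 0" "b \<noteq> x"
  shows "(f - x) + b \<in> S - {x}"
proof -
  have "(f - x) + b \<noteq> x"
  proof
    assume "(f - x) + b = x"
    then have "b = x + x - f" by (simp add: algebra_simps)
    with b double_x_minus_f_notin show False by simp
  qed
  moreover have "(f - x) + b \<in> S"
  proof (rule ccontr)
    assume "(f - x) + b \<notin> S"
    moreover have "(f - x) + b \<in> C"
      using integer_cone_add[OF cone x_below_f] b sg unfolding C_semigroup_def by auto
    ultimately have "x - b \<in> S \<or> (f - x + b) + (f - x + b) = f"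
      using gap_dual[of "(f - x) + b"] unfolding gaps_def by (simp add: algebra_simps)
    then show False
    proof
      assume "x - b \<in> S"
      with b have "b \<in> S - {0}" "x - b \<in> S - {0}" "x = b + (x - b)" by auto
      with mingen show False unfolding minimal_generator_def by blast
    next
      assume "(f - x + b) + (f - x + b) = f"
      then have "x + x - f = b + b" by (simp add: vec_eq_iff algebra_simps)
      with double_x_minus_f_notin S_add b show False by metis
    qed
  qed
  ultimately show ?thesis by simp
qed

lemma swap_double_in_S: "(f - x) + (f - x) \<in> S - {x}"
proof -
  have "(f - x) + (f - x) \<noteq> x"
  proof
    assume "(f - x) + (f - x) = x"
    then have "3 *s x = 2 *s f" by (simp add: vec_eq_iff algebra_simps)
    with three_x show False ..
  qed
  moreover have "(f - x) + (f - x) \<in> S"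
  proof (rule ccontr)
    assume "(f - x) + (f - x) \<notin> S"
    then have "x + x - f \<in> S \<or> ((f - x) + (f - x)) + ((f - x) + (f - x)) = f"
      using gap_dual[of "(f - x) + (f - x)"] integer_cone_add[OF cone x_below_f x_below_f]
      unfolding gaps_def by (simp add: algebra_simps)
    moreover have "((f - x) + (f - x)) + ((f - x) + (f - x)) \<noteq> f"
    proof
      assume "((f - x) + (f - x)) + ((f - x) + (f - x)) = f"
      then have "4 *s x = 3 *s f" by (simp add: vec_eq_iff algebra_simps)
      with four_x show False ..
    qed
    ultimately show False using double_x_minus_f_notin by blast
  qed
  ultimately show ?thesis by simp
qed

lemma swap_add_closed:
  assumes "a \<in> swapped" "b \<in> swapped"
  shows "a + b \<in> swapped"
proof -
  have mixed: "(f - x) + c \<in> swapped" if "c \<in> S - {x}" for c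
    using swap_add_in_S[of c] that by (cases "c = 0") auto
  show ?thesis
  proof (cases "a = f - x"; cases "b = f - x")
    assume "a \<noteq> f - x" "b \<noteq> f - x"
    with assms show ?thesis
      using minimal_generator_Diff_add_closed[OF mingen S_add] by auto
  qed (use assms swap_double_in_S mixed in \<open>auto simp: add.commute\<close>)
qed

lemma swap_C_semigroup: "C_semigroup C swapped"
proof -
  have "C - swapped \<subseteq> insert x (C - S)" by auto
  then have "finite (C - swapped)"
    using sg finite_subset unfolding C_semigroup_def by blast
  moreover have "swapped \<subseteq> C" "0 \<in> swapped"
    using sg mingen x_below_f unfolding C_semigroup_def minimal_generator_def by auto
  ultimately show ?thesis
    unfolding C_semigroup_def using swap_add_closed by blast
qed

lemma swap_gaps: "gaps C swapped \<subseteq> insert x (gaps C S - {f - x})"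
  unfolding gaps_def by auto

lemma swap_gap_dual:
  assumes "g \<in> gaps C swapped"
  shows "f - g \<in> swapped \<or> g + g = f"
proof (cases "g = x")
  case False
  with assms swap_gaps have "g \<in> gaps C S" "f - g \<noteq> x" by (auto simp: algebra_simps)
  with gap_dual show ?thesis by auto
qed simp

lemma swap_frobenius:
  assumes mo: "monomial_order le" and fr: "frobenius le C S f"
  shows "frobenius le C swapped f"
proof -
  have "x \<in> natvecs" "f - x \<in> natvecs"
    using integer_cone_subset_natvecs[OF cone] sg mingen x_below_f
    unfolding C_semigroup_def minimal_generator_def by auto
  then have "le x f"
    using monomial_order_le_add[OF mo] by fastforce
  moreover have "f \<in> gaps C swapped"
    using fr mingen unfolding frobenius_def gaps_def minimal_generator_def by auto
  ultimately show ?thesis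
    using fr swap_gaps unfolding frobenius_def by blast
qed

end

theorem mainTheorem9:
  fixes C S :: "(int ^ 'p) set" and le :: "int ^ 'p \<Rightarrow> int ^ 'p \<Rightarrow> bool"
    and f x :: "int ^ 'p"
  assumes "integer_cone C"
    and "monomial_order le"
    and "C_semigroup C S"
    and "irreducible_Csg le C S"
    and "frobenius le C S f"
    and "x \<in> I_S C S f"
    and "minimal_generator S x"
    and "2 *s x - f \<notin> S"
    and "3 *s x \<noteq> 2 *s f"
    and "4 *s x \<noteq> 3 *s f"
  shows "C_semigroup C ((S - {x}) \<union> {f - x}) \<and>
         irreducible_Csg le C ((S - {x}) \<union> {f - x}) \<and>
         frobenius le C ((S - {x}) \<union> {f - x}) f"
proof -
  interpret gap_dual_swap C S f x
  proof
    show "f - x \<in> C" using assms(6) unfolding I_S_def cone_le_def by blast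
    show "\<And>g. g \<in> gaps C S \<Longrightarrow> f - g \<in> S \<or> g + g = f"
      using irreducible_Csg_gap_dual[OF assms(1-5)] .
  qed (use assms in auto)
  have fr: "frobenius le C swapped f"
    using swap_frobenius[OF assms(2,5)] .
  moreover have "irreducible_Csg le C swapped"
    using irreducible_Csg_if_gap_dual[OF assms(1,2) swap_C_semigroup fr] swap_gap_dual by blast
  ultimately show ?thesis using swap_C_semigroup by blast
qed

end
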